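(* Let $n\ge1$ and let $\Lambda$ be a normal congruence on $E_n$. Then there is $k\in\{1,\dots,n\}$ such that $\Lambda=\iota_{E_n}\cup(E_n^{(k)}\times E_n^{(k)})$.
   Context: Let $X=\{1,\dots,n\}$, $X'=\{1',\dots,n'\}$. $\mathcal{I}^{\ast}_n$ is the set of partitions of $X\cup X'$ all of whose blocks meet both $X$ and $X'$, with product: regard $\alpha$ as a partition of $X\cup X''$ and $\beta$ as a partition of $X''\cup X'$ ($X''$ a third copy of $X$), and let $\alpha\beta$ be the partition of $X\cup X'$ induced by the equivalence on $X\cup X''\cup X'$ generated by the blocks of both; it is an inverse semigroup. $E_n$ is its set of idempotents (the elements all of whose blocks have the form $E\cup E'$); rank = number of blocks; $E_n^{(k)}=\{e\in E_n:\mathrm{rank}(e)\le k\}$; $\iota_{E_n}$ is the identity relation on $E_n$. A congruence $\Lambda$ on the semilattice $E_n$ is normal if $e\Lambda f$ implies $s^{-1}es\,\Lambda\,s^{-1}fs$ for all $s\in\mathcal{I}^{\ast}_n$. *)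

theory Defs
  imports Main "HOL-Library.Disjoint_Sets"
begin

text \<open>Points of X \<union> X': Inl i stands for i, Inr i stands for i'.\<close>
type_synonym pt = "nat + nat"
type_synonym bpart = "pt set set"

definition carrierX :: "nat \<Rightarrow> pt set" where
  "carrierX n = Inl ` {1..n} \<union> Inr ` {1..n}"

definition Istar :: "nat \<Rightarrow> bpart set" where
  "Istar n = {P. partition_on (carrierX n) P \<and>
      (\<forall>B\<in>P. (\<exists>i. Inl i \<in> B) \<and> (\<exists>i. Inr i \<in> B))}"

text \<open>Three copies X, X'', X' encoded as (0,i), (1,i), (2,i).
  alpha lives on X \<union> X'' (lift1), beta on X'' \<union> X' (lift2).\<close>
fun lift1 :: "pt \<Rightarrow> nat \<times> nat" where
  "lift1 (Inl i) = (0, i)" | "lift1 (Inr i) = (1, i)"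

fun lift2 :: "pt \<Rightarrow> nat \<times> nat" where
  "lift2 (Inl i) = (1, i)" | "lift2 (Inr i) = (2, i)"

definition down :: "nat \<times> nat \<Rightarrow> pt" where
  "down x = (if fst x = 0 then Inl (snd x) else Inr (snd x))"

definition genrel :: "bpart \<Rightarrow> bpart \<Rightarrow> ((nat \<times> nat) \<times> (nat \<times> nat)) set" where
  "genrel a b = {(x, y). (\<exists>B\<in>a. x \<in> lift1 ` B \<and> y \<in> lift1 ` B) \<or>
                         (\<exists>B\<in>b. x \<in> lift2 ` B \<and> y \<in> lift2 ` B)}"

text \<open>Product: the partition of X \<union> X' induced by the equivalence on X \<union> X'' \<union> X'
  generated by the blocks of a and b.\<close>
definition pprod :: "bpart \<Rightarrow> bpart \<Rightarrow> bpart" where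
  "pprod a b = (\<lambda>x. down ` {y. (x, y) \<in> (genrel a b)\<^sup>* \<and> fst y \<noteq> 1})
      ` {x. fst x \<noteq> 1 \<and> x \<in> Field (genrel a b)}"

definition pinv :: "nat \<Rightarrow> bpart \<Rightarrow> bpart" where
  "pinv n s = (THE t. t \<in> Istar n \<and> pprod (pprod s t) s = s \<and> pprod (pprod t s) t = t)"

definition En :: "nat \<Rightarrow> bpart set" where
  "En n = {e \<in> Istar n. pprod e e = e}"

definition rank :: "bpart \<Rightarrow> nat" where
  "rank e = card e"

definition Enk :: "nat \<Rightarrow> nat \<Rightarrow> bpart set" where
  "Enk n k = {e \<in> En n. rank e \<le> k}"

definition semilattice_congruence :: "nat \<Rightarrow> (bpart \<times> bpart) set \<Rightarrow> bool" where
  "semilattice_congruence n L \<longleftrightarrow> equiv (En n) L \<and>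
     (\<forall>(e, f)\<in>L. \<forall>g\<in>En n. (pprod e g, pprod f g) \<in> L \<and> (pprod g e, pprod g f) \<in> L)"

definition normal_congruence :: "nat \<Rightarrow> (bpart \<times> bpart) set \<Rightarrow> bool" where
  "normal_congruence n L \<longleftrightarrow> semilattice_congruence n L \<and>
     (\<forall>(e, f)\<in>L. \<forall>s\<in>Istar n.
        (pprod (pprod (pinv n s) e) s, pprod (pprod (pinv n s) f) s) \<in> L)"

end

theory Submission
  imports Defs
begin

(* The idempotents of I*_n are the elements diag P with blocks E \<union> E' for the blocks E of a
   partition P of {1..n}. Their product is diag of the join of the partitions, so E_n is the
   lattice of partitions under join, with zero diag {{1..n}}, and rank (diag P) = card P.
   Conjugating diag P by the element with blocks E \<union> \<phi>(E)', for a bijection \<phi> from the blocks of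
   P onto those of another partition, renames the blocks of P by \<phi>.

   If a normal congruence relates e \<noteq> f, it relates one of them, diag X, to the strictly coarser
   idempotent ef = diag Y. Conjugating by the transposition of two blocks of X that lie in
   different blocks F, F2 of Y (F containing a further block of X), and multiplying back, relates
   diag X to an idempotent in which F and F2 are merged; by induction on the number of blocks of
   Y, diag X is related to the zero. The class of the zero is closed under coarsening (multiply)
   and under renaming blocks (conjugate), hence consists of all idempotents of rank at most k, for
   the largest rank k in it, and all other classes are singletons. *)

section \<open>Partitions\<close>

definition joined :: "'a set set \<Rightarrow> 'a \<Rightarrow> 'a \<Rightarrow> bool" where
  "joined P p q \<longleftrightarrow> (\<exists>B\<in>P. p \<in> B \<and> q \<in> B)"

lemma partition_on_block_unique:
  "partition_on S P \<Longrightarrow> B \<in> P \<Longrightarrow> B' \<in> P \<Longrightarrow> p \<in> B \<Longrightarrow> p \<in> B' \<Longrightarrow> B = B'"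
  using partition_onD2 disjointD by blast

lemma joined_sym: "joined P p q \<Longrightarrow> joined P q p"
  unfolding joined_def by blast

lemma joined_trans:
  assumes "partition_on S P" "joined P p q" "joined P q r"
  shows "joined P p r"
  using assms partition_on_block_unique unfolding joined_def by metis

lemma joined_in_carrier: "partition_on S P \<Longrightarrow> joined P p q \<Longrightarrow> p \<in> S \<and> q \<in> S"
  unfolding joined_def using partition_onD1 by blast

lemma joined_subset_block:
  assumes W: "partition_on S W" and E: "E \<noteq> {}" and joined: "\<And>i j. i \<in> E \<Longrightarrow> j \<in> E \<Longrightarrow> joined W i j"
  shows "\<exists>G\<in>W. E \<subseteq> G"
proof -
  obtain x where x: "x \<in> E" using E by blast
  then obtain G where G: "G \<in> W" "x \<in> G" using joined[OF x x] unfolding joined_def by blast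
  have "y \<in> G" if "y \<in> E" for y
    using joined[OF x that] partition_on_block_unique[OF W _ G(1)] G(2) unfolding joined_def by blast
  with G(1) show ?thesis by blast
qed

lemma disjoint_family_on_partition_on:
  "partition_on S (l ` I) \<Longrightarrow> inj_on l I \<Longrightarrow> disjoint_family_on l I"
  using disjoint_image_disjoint_family_on partition_onD2 by blast

lemma partition_on_image_nonempty: "partition_on S (l ` I) \<Longrightarrow> i \<in> I \<Longrightarrow> l i \<noteq> {}"
  using partition_onD3 by fastforce

lemma disjoint_family_on_Union_image_subset:
  assumes "disjoint_family_on f I" "\<And>i. i \<in> I \<Longrightarrow> g i \<noteq> {}" "disjoint_family_on h J"
  shows "disjoint_family_on (\<lambda>j. \<Union>(f ` {i \<in> I. g i \<subseteq> h j})) J"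
  unfolding disjoint_family_on_def
proof (intro ballI impI)
  fix j j' assume j: "j \<in> J" "j' \<in> J" "j \<noteq> j'"
  have "i \<noteq> i'" if "i \<in> I" "g i \<subseteq> h j" "g i' \<subseteq> h j'" for i i'
    using that assms(2,3) j unfolding disjoint_family_on_def by blast
  then show "\<Union>(f ` {i \<in> I. g i \<subseteq> h j}) \<inter> \<Union>(f ` {i \<in> I. g i \<subseteq> h j'}) = {}"
    using assms(1) unfolding disjoint_family_on_def by blast
qed

lemma Union_image_subset_self:
  assumes "disjoint_family_on g I" "\<And>i. i \<in> I \<Longrightarrow> g i \<noteq> {}" "j \<in> I"
  shows "\<Union>(f ` {i \<in> I. g i \<subseteq> g j}) = f j"
proof -
  have "{i \<in> I. g i \<subseteq> g j} = {j}"
    using assms unfolding disjoint_family_on_def by blast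
  then show ?thesis by simp
qed

lemma refines_block_subset:
  assumes "refines S P Q" "E \<in> P" "F \<in> Q" "x \<in> E" "x \<in> F"
  shows "E \<subseteq> F"
proof -
  obtain F' where "F' \<in> Q" "E \<subseteq> F'" using assms(1,2) unfolding refines_def by blast
  moreover from this have "F' = F"
    using assms partition_on_block_unique[of S Q F' F x] unfolding refines_def by blast
  ultimately show ?thesis by simp
qed

lemma Union_refines_blocks:
  assumes "refines S P Q" "F \<in> Q"
  shows "\<Union>{E \<in> P. E \<subseteq> F} = F"
  using partition_onD1[OF refines_obtains_subset[OF assms]] by simp

lemma refines_block_contains:
  assumes "refines S P Q" "F \<in> Q"
  obtains E where "E \<in> P" "E \<subseteq> F"
proof -
  have "F \<noteq> {}" using assms unfolding refines_def partition_on_def by blast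
  then show ?thesis using Union_refines_blocks[OF assms] that by blast
qed

lemma card_partition_on_le:
  assumes "finite S" "partition_on S P"
  shows "card P \<le> card S"
proof -
  have "p \<noteq> {}" "finite p" if p: "p \<in> P" for p
  proof -
    show "p \<noteq> {}" using partition_onD3[OF assms(2)] p by blast
    have "p \<subseteq> S" using partition_onD1[OF assms(2)] p by blast
    then show "finite p" using assms(1) by (rule finite_subset)
  qed
  then have "card P \<le> (\<Sum>p\<in>P. card p)"
    using sum_mono[of P "\<lambda>_. 1" card] by (simp add: Suc_leI card_gt_0_iff)
  also have "\<dots> = card S" using product_partition[OF assms(2)] \<open>\<And>p. p \<in> P \<Longrightarrow> finite p\<close> by simp
  finally show ?thesis .
qed

lemma card_partition_on_pos:
  assumes "finite S" "S \<noteq> {}" "partition_on S P"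
  shows "0 < card P"
  using assms finite_elements partition_onD1 by (fastforce simp: card_gt_0_iff)

lemma card_partition_on_atLeastAtMost:
  assumes "1 \<le> n" "partition_on {1..n} P"
  shows "card P \<in> {1..n}"
  using card_partition_on_le[OF _ assms(2)] card_partition_on_pos[OF _ _ assms(2)] assms(1) by simp

lemma card_refines_less:
  assumes PQ: "refines S P Q" and S: "finite S"
    and E: "E \<in> P" "E' \<in> P" "E \<noteq> E'" and F: "F \<in> Q" "E \<subseteq> F" "E' \<subseteq> F"
  shows "card Q < card P"
proof -
  have P: "partition_on S P" and Q: "partition_on S Q" using PQ unfolding refines_def by blast+
  define h where "h E = (SOME F. F \<in> Q \<and> E \<subseteq> F)" for E
  have h_eq: "h E = F" if EF: "E \<in> P" "F \<in> Q" "E \<subseteq> F" for E F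
  proof -
    have "\<exists>F. F \<in> Q \<and> E \<subseteq> F" using EF by blast
    then have "h E \<in> Q" "E \<subseteq> h E" unfolding h_def by (metis (mono_tags, lifting) someI_ex)+
    moreover obtain x where "x \<in> E" using partition_onD3[OF P] EF(1) by fastforce
    ultimately show ?thesis using partition_on_block_unique[OF Q] EF by blast
  qed
  have "Q = h ` P"
  proof
    show "h ` P \<subseteq> Q" using h_eq PQ unfolding refines_def by force
    show "Q \<subseteq> h ` P"
    proof
      fix G assume "G \<in> Q"
      then obtain E where "E \<in> P" "E \<subseteq> G" using refines_block_contains[OF PQ] by metis
      with h_eq[OF this(1) \<open>G \<in> Q\<close>] show "G \<in> h ` P" by blast
    qed
  qed
  moreover have "\<not> inj_on h P" using h_eq E F unfolding inj_on_def by metis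
  moreover have "finite P" using finite_elements[OF S P] .
  ultimately show ?thesis using card_image_le inj_on_iff_eq_card by (metis le_neq_implies_less)
qed

lemma strict_refines_merges:
  assumes XY: "refines S X Y" and "X \<noteq> Y"
  shows "\<exists>F\<in>Y. \<exists>E\<in>X. \<exists>E'\<in>X. E \<noteq> E' \<and> E \<subseteq> F \<and> E' \<subseteq> F"
proof (rule ccontr)
  assume no_merge: "\<not> ?thesis"
  have "F \<in> X" if F: "F \<in> Y" for F
  proof -
    obtain E where E: "E \<in> X" "E \<subseteq> F" using refines_block_contains[OF XY F] .
    then have "{E' \<in> X. E' \<subseteq> F} = {E}" using no_merge F by blast
    then show ?thesis using Union_refines_blocks[OF XY F] E(1) by simp
  qed
  then have "refines S Y X" using XY unfolding refines_def by blast
  then show False using refines_asym[OF XY] \<open>X \<noteq> Y\<close> by simp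
qed

text \<open>\<phi> swaps a block E2 of X that shares its block F of Y with another block E1 of X, and a
  block E3 of X inside another block F2 of Y; the \<phi>-images of the blocks of X inside F then
  include E1 \<subseteq> F and E3 \<subseteq> F2.\<close>

lemma exists_block_transposition:
  assumes XY: "refines S X Y" "X \<noteq> Y" and Y: "2 \<le> card Y"
  obtains \<phi> F F2 where "bij_betw \<phi> X X" "\<And>E. \<phi> (\<phi> E) = E" "F \<in> Y" "F2 \<in> Y" "F \<noteq> F2"
    "\<Union>(\<phi> ` {E \<in> X. E \<subseteq> F}) \<inter> F \<noteq> {}" "\<Union>(\<phi> ` {E \<in> X. E \<subseteq> F}) \<inter> F2 \<noteq> {}"
proof -
  have X: "partition_on S X" and Yp: "partition_on S Y" using XY unfolding refines_def by blast+
  obtain F E1 E2 where F: "F \<in> Y" and E12: "E1 \<in> X" "E2 \<in> X" "E1 \<noteq> E2" "E1 \<subseteq> F" "E2 \<subseteq> F"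
    using strict_refines_merges[OF XY] by blast
  have "\<not> Y \<subseteq> {F}" using Y card_mono[of "{F}" Y] by auto
  then obtain F2 where F2: "F2 \<in> Y" "F2 \<noteq> F" by blast
  obtain E3 where E3: "E3 \<in> X" "E3 \<subseteq> F2" using refines_block_contains[OF XY(1) F2(1)] .
  have "F \<inter> F2 = {}" using disjointD[OF partition_onD2[OF Yp] F F2(1)] F2(2) by blast
  moreover have ne: "E1 \<noteq> {}" "E2 \<noteq> {}" "E3 \<noteq> {}" using E12 E3 partition_onD3[OF X] by blast+
  ultimately have E3_new: "E3 \<noteq> E1" "E3 \<noteq> E2" using E12 E3 by blast+
  define \<phi> where "\<phi> E = (if E = E2 then E3 else if E = E3 then E2 else E)" for E
  have \<phi>\<phi>: "\<phi> (\<phi> E) = E" for E unfolding \<phi>_def using E3_new by auto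
  have "\<phi> E \<in> X" if "E \<in> X" for E unfolding \<phi>_def using that E12 E3 by auto
  then have bij: "bij_betw \<phi> X X" by (intro bij_betwI[of _ _ _ \<phi>]) (use \<phi>\<phi> in auto)
  have "\<phi> E1 = E1" "\<phi> E2 = E3" unfolding \<phi>_def using E12 E3_new by auto
  then have U: "E1 \<subseteq> \<Union>(\<phi> ` {E \<in> X. E \<subseteq> F})" "E3 \<subseteq> \<Union>(\<phi> ` {E \<in> X. E \<subseteq> F})"
    using E12 by blast+
  have meet: "A \<subseteq> U \<Longrightarrow> A \<subseteq> B \<Longrightarrow> A \<noteq> {} \<Longrightarrow> U \<inter> B \<noteq> {}" for A U B :: "'a set" by blast
  show ?thesis
    by (rule that[OF bij \<phi>\<phi> F F2(1) F2(2)[symmetric] meet[OF U(1) E12(4) ne(1)] meet[OF U(2) E3(2) ne(3)]])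
qed

lemma exists_coarsening_card:
  assumes S: "finite S" and A: "partition_on S A" and k: "1 \<le> k" "k \<le> card A"
  obtains A' where "refines S A A'" "card A' = k"
proof -
  have "k - 1 \<le> card A" using k by simp
  then obtain K where K: "K \<subseteq> A" "card K = k - 1" "finite K"
    by (rule obtain_subset_with_card_n)
  define R where "R = A - K"
  have "card K < card A" using K k by simp
  then have "\<not> A \<subseteq> K" using K(3) card_mono leD by meson
  then obtain E where "E \<in> R" unfolding R_def by blast
  moreover have "E \<noteq> {}" using partition_onD3[OF A] \<open>E \<in> R\<close> unfolding R_def by blast
  ultimately have R_ne: "\<Union>R \<noteq> {}" by blast
  have "E \<inter> E' = {}" if "E \<in> R" "E' \<in> K" for E E'
    using disjointD[OF partition_onD2[OF A]] that K(1) unfolding R_def by blast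
  then have disj: "disjnt (\<Union>R) (\<Union>K)" unfolding disjnt_def by blast
  have "partition_on S (insert (\<Union>R) K)"
  proof (subst partition_on_insert[OF disj], intro conjI)
    have "\<Union>K = S - \<Union>R"
      using partition_onD1[OF A] disj K(1) unfolding R_def disjnt_def by blast
    then show "partition_on (S - \<Union>R) K"
      using K(1) partition_onD2[OF A] partition_onD3[OF A]
      unfolding partition_on_def by (auto intro: pairwise_subset)
    show "\<Union>R \<subseteq> S" using partition_onD1[OF A] unfolding R_def by blast
  qed (rule R_ne)
  moreover have "\<forall>E\<in>A. \<exists>F\<in>insert (\<Union>R) K. E \<subseteq> F" unfolding R_def by blast
  moreover have "\<Union>R \<notin> K" using disj R_ne unfolding disjnt_def by blast
  then have "card (insert (\<Union>R) K) = k" using K k by simp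
  ultimately show ?thesis using that A unfolding refines_def by blast
qed

lemma partition_on_one_block: "1 \<le> (n::nat) \<Longrightarrow> partition_on {1..n} {{1..n}}"
  by (rule partition_on_space) simp

section \<open>Elements of I*_n and their product\<close>

lemma Inl_in_carrierX [simp]: "Inl i \<in> carrierX n \<longleftrightarrow> i \<in> {1..n}"
  and Inr_in_carrierX [simp]: "Inr i \<in> carrierX n \<longleftrightarrow> i \<in> {1..n}"
  unfolding carrierX_def by auto

lemma Istar_partition_on: "t \<in> Istar n \<Longrightarrow> partition_on (carrierX n) t"
  unfolding Istar_def by blast

lemma Istar_block_Inl: "t \<in> Istar n \<Longrightarrow> B \<in> t \<Longrightarrow> \<exists>i. Inl i \<in> B"
  and Istar_block_Inr: "t \<in> Istar n \<Longrightarrow> B \<in> t \<Longrightarrow> \<exists>j. Inr j \<in> B"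
  unfolding Istar_def by blast+

lemma Istar_joined_Inr:
  assumes "t \<in> Istar n" "i \<in> {1..n}"
  shows "\<exists>j. joined t (Inl i) (Inr j)"
proof -
  have "Inl i \<in> carrierX n" using assms(2) by simp
  then obtain B where "B \<in> t" "Inl i \<in> B"
    using partition_onD1[OF Istar_partition_on[OF assms(1)]] by blast
  then show ?thesis using Istar_block_Inr[OF assms(1)] unfolding joined_def by blast
qed

lemma Istar_joined_Inl:
  assumes "t \<in> Istar n" "j \<in> {1..n}"
  shows "\<exists>i. joined t (Inl i) (Inr j)"
proof -
  have "Inr j \<in> carrierX n" using assms(2) by simp
  then obtain B where "B \<in> t" "Inr j \<in> B"
    using partition_onD1[OF Istar_partition_on[OF assms(1)]] by blast
  then show ?thesis using Istar_block_Inl[OF assms(1)] unfolding joined_def by blast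
qed

text \<open>Since every block meets both X and X', an element of I*_n is determined by which
  pairs i, j' it joins.\<close>

lemma Istar_refines:
  assumes s: "s \<in> Istar n" and t: "t \<in> Istar n"
    and st: "\<And>i j. joined s (Inl i) (Inr j) \<Longrightarrow> joined t (Inl i) (Inr j)"
  shows "refines (carrierX n) s t"
  unfolding refines_def
proof (intro conjI ballI)
  have sp: "partition_on (carrierX n) s" and tp: "partition_on (carrierX n) t"
    using s t by (simp_all add: Istar_partition_on)
  then show "partition_on (carrierX n) s" "partition_on (carrierX n) t" by simp_all
  fix B assume B: "B \<in> s"
  obtain i j where ij: "Inl i \<in> B" "Inr j \<in> B"
    using Istar_block_Inl[OF s B] Istar_block_Inr[OF s B] by blast
  obtain T where T: "T \<in> t" "Inl i \<in> T" "Inr j \<in> T"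
    using st[of i j] B ij unfolding joined_def by blast
  have "p \<in> T" if p: "p \<in> B" for p
  proof (cases p)
    case (Inl i')
    obtain T' where "T' \<in> t" "Inl i' \<in> T'" "Inr j \<in> T'"
      using st[of i' j] B ij p Inl unfolding joined_def by blast
    then show ?thesis using partition_on_block_unique[OF tp T(1)] T Inl by blast
  next
    case (Inr j')
    obtain T' where "T' \<in> t" "Inl i \<in> T'" "Inr j' \<in> T'"
      using st[of i j'] B ij p Inr unfolding joined_def by blast
    then show ?thesis using partition_on_block_unique[OF tp T(1)] T Inr by blast
  qed
  then show "\<exists>T\<in>t. B \<subseteq> T" using T(1) by blast
qed

lemma Istar_eqI:
  assumes "s \<in> Istar n" "t \<in> Istar n"
    and "\<And>i j. joined s (Inl i) (Inr j) \<longleftrightarrow> joined t (Inl i) (Inr j)"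
  shows "s = t"
  using assms by (metis Istar_refines refines_asym)

lemma genrel_sym: "sym (genrel a b)"
  unfolding genrel_def sym_def by blast

lemma genrel_lift1I: "B \<in> a \<Longrightarrow> p \<in> B \<Longrightarrow> q \<in> B \<Longrightarrow> (lift1 p, lift1 q) \<in> genrel a b"
  and genrel_lift2I: "B \<in> b \<Longrightarrow> p \<in> B \<Longrightarrow> q \<in> B \<Longrightarrow> (lift2 p, lift2 q) \<in> genrel a b"
  unfolding genrel_def by blast+

lemma down_Pair [simp]: "down (0, i) = Inl i" "down (2, i) = Inr i"
  unfolding down_def by simp_all

lemma joined_pprodI:
  assumes "(u, v) \<in> (genrel a b)\<^sup>*" "(u, u) \<in> genrel a b" "fst u \<noteq> 1" "fst v \<noteq> 1"
  shows "joined (pprod a b) (down u) (down v)"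
proof -
  let ?C = "down ` {w. (u, w) \<in> (genrel a b)\<^sup>* \<and> fst w \<noteq> 1}"
  have "u \<in> Field (genrel a b)" using assms(2) by (rule FieldI1)
  then have "?C \<in> pprod a b"
    unfolding pprod_def using assms(3) by (intro imageI) simp
  moreover have "down u \<in> ?C" by (rule imageI) (use assms(3) in simp)
  moreover have "down v \<in> ?C" by (rule imageI) (use assms(1,4) in simp)
  ultimately show ?thesis unfolding joined_def by (intro bexI conjI)
qed

lemma joined_pprod:
  assumes "joined a (Inl i) (Inr j)" "joined b (Inl j) (Inr k)"
  shows "joined (pprod a b) (Inl i) (Inr k)"
proof -
  obtain A B where A: "A \<in> a" "Inl i \<in> A" "Inr j \<in> A" and B: "B \<in> b" "Inl j \<in> B" "Inr k \<in> B"
    using assms unfolding joined_def by blast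
  have "((0, i), (1, j)) \<in> genrel a b" "((1, j), (2, k)) \<in> genrel a b" "((0, i), (0, i)) \<in> genrel a b"
    using genrel_lift1I[OF A(1)] genrel_lift2I[OF B(1)] A B by force+
  then have "((0, i), (2, k)) \<in> (genrel a b)\<^sup>*" "((0, i), (0, i)) \<in> genrel a b"
    by (meson converse_rtrancl_into_rtrancl r_into_rtrancl)+
  then show ?thesis using joined_pprodI[of "(0, i)" "(2, k)"] by simp
qed

lemma rtrancl_class_eq:
  assumes "sym R"
    and cover: "\<And>x y. (x, y) \<in> R \<Longrightarrow> \<exists>j\<in>J. x \<in> Z j \<and> y \<in> Z j"
    and disj: "disjoint_family_on Z J"
    and connected: "\<And>j x. j \<in> J \<Longrightarrow> x \<in> Z j \<Longrightarrow> (x, c j) \<in> R\<^sup>*"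
    and x: "j \<in> J" "x \<in> Z j"
  shows "{y. (x, y) \<in> R\<^sup>*} = Z j"
proof
  have "x = y \<or> (\<exists>j\<in>J. x \<in> Z j \<and> y \<in> Z j)" if "(x, y) \<in> R\<^sup>*" for y
    using that
  proof (induction rule: rtrancl_induct)
    case (step y z)
    obtain j' where j': "j' \<in> J" "y \<in> Z j'" "z \<in> Z j'" using cover[OF step(2)] by blast
    from step(3) show ?case
    proof
      assume "\<exists>j\<in>J. x \<in> Z j \<and> y \<in> Z j"
      then obtain j where "j \<in> J" "x \<in> Z j" "y \<in> Z j" by blast
      moreover from this j' have "j = j'" using disjoint_family_onD[OF disj] by blast
      ultimately show ?thesis using j' by blast
    qed (use j' in blast)
  qed simp
  then show "{y. (x, y) \<in> R\<^sup>*} \<subseteq> Z j" using x disjoint_family_onD[OF disj] by blast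
  show "Z j \<subseteq> {y. (x, y) \<in> R\<^sup>*}"
  proof
    fix y assume "y \<in> Z j"
    then have "(c j, y) \<in> R\<^sup>*"
      using connected x(1) symD[OF sym_rtrancl[OF \<open>sym R\<close>]] by blast
    with connected[OF x] show "y \<in> {y. (x, y) \<in> R\<^sup>*}" by simp
  qed
qed

text \<open>A product is computed by exhibiting the classes Z j of the equivalence generated by genrel,
  each connected to a point c j of the middle layer X''.\<close>

lemma pprod_eqI:
  fixes Z :: "'j \<Rightarrow> (nat \<times> nat) set"
  assumes cover: "\<And>x y. (x, y) \<in> genrel a b \<Longrightarrow> \<exists>j\<in>J. x \<in> Z j \<and> y \<in> Z j"
    and disj: "disjoint_family_on Z J"
    and connected: "\<And>j x. j \<in> J \<Longrightarrow> x \<in> Z j \<Longrightarrow> (x, c j) \<in> (genrel a b)\<^sup>*"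
    and middle: "\<And>j. j \<in> J \<Longrightarrow> fst (c j) = 1"
    and outer: "\<And>j. j \<in> J \<Longrightarrow> \<exists>x\<in>Z j. fst x \<noteq> 1"
  shows "pprod a b = (\<lambda>j. down ` (Z j \<inter> {x. fst x \<noteq> 1})) ` J"
proof -
  let ?R = "genrel a b"
  have closure_eq: "{y. (x, y) \<in> ?R\<^sup>*} = Z j" if "j \<in> J" "x \<in> Z j" for j x
    using genrel_sym cover disj connected that by (rule rtrancl_class_eq)
  have field: "\<exists>j\<in>J. x \<in> Z j" if "x \<in> Field ?R" for x
    using that cover unfolding Field_def by blast
  show ?thesis unfolding pprod_def
  proof (intro set_eqI iffI)
    fix W assume "W \<in> (\<lambda>x. down ` {y. (x, y) \<in> ?R\<^sup>* \<and> fst y \<noteq> 1}) ` {x. fst x \<noteq> 1 \<and> x \<in> Field ?R}"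
    then obtain x where x: "fst x \<noteq> 1" "x \<in> Field ?R"
      and W: "W = down ` {y. (x, y) \<in> ?R\<^sup>* \<and> fst y \<noteq> 1}" by blast
    obtain j where j: "j \<in> J" "x \<in> Z j" using field[OF x(2)] by blast
    have "{y. (x, y) \<in> ?R\<^sup>* \<and> fst y \<noteq> 1} = Z j \<inter> {x. fst x \<noteq> 1}" using closure_eq[OF j] by blast
    with W j show "W \<in> (\<lambda>j. down ` (Z j \<inter> {x. fst x \<noteq> 1})) ` J" by auto
  next
    fix W assume "W \<in> (\<lambda>j. down ` (Z j \<inter> {x. fst x \<noteq> 1})) ` J"
    then obtain j where j: "j \<in> J" and W: "W = down ` (Z j \<inter> {x. fst x \<noteq> 1})" by blast
    obtain x where x: "x \<in> Z j" "fst x \<noteq> 1" using outer[OF j] by blast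
    have "x \<noteq> c j" using x(2) middle[OF j] by auto
    then have "x \<in> Field ?R"
      using connected[OF j x(1)] by (auto elim: converse_rtranclE intro: FieldI1)
    moreover have "W = down ` {y. (x, y) \<in> ?R\<^sup>* \<and> fst y \<noteq> 1}"
      using W closure_eq[OF j x(1)] by blast
    ultimately show "W \<in> (\<lambda>x. down ` {y. (x, y) \<in> ?R\<^sup>* \<and> fst y \<noteq> 1}) ` {x. fst x \<noteq> 1 \<and> x \<in> Field ?R}"
      using x(2) by blast
  qed
qed

section \<open>Elements given by indexed blocks\<close>

definition bipart :: "'i set \<Rightarrow> ('i \<Rightarrow> nat set) \<Rightarrow> ('i \<Rightarrow> nat set) \<Rightarrow> bpart" where
  "bipart I l r = (\<lambda>i. Inl ` l i \<union> Inr ` r i) ` I"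

lemma joined_bipart: "joined (bipart I l r) (Inl a) (Inr b) \<longleftrightarrow> (\<exists>i\<in>I. a \<in> l i \<and> b \<in> r i)"
  unfolding joined_def bipart_def by blast

lemma bipart_cong:
  "(\<And>i. i \<in> I \<Longrightarrow> l i = l' i) \<Longrightarrow> (\<And>i. i \<in> I \<Longrightarrow> r i = r' i) \<Longrightarrow> bipart I l r = bipart I l' r'"
  unfolding bipart_def by auto

lemma bipart_in_Istar:
  assumes l: "partition_on {1..n} (l ` I)" "inj_on l I"
    and r: "partition_on {1..n} (r ` I)" "inj_on r I"
  shows "bipart I l r \<in> Istar n"
proof -
  have dl: "disjoint_family_on l I" and dr: "disjoint_family_on r I"
    using l r by (simp_all add: disjoint_family_on_partition_on)
  have "\<Union>(bipart I l r) = Inl ` \<Union>(l ` I) \<union> Inr ` \<Union>(r ` I)" unfolding bipart_def by auto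
  then have union: "\<Union>(bipart I l r) = carrierX n"
    using partition_onD1[OF l(1)] partition_onD1[OF r(1)] unfolding carrierX_def by simp
  have disjoint: "disjnt B B'" if B: "B \<in> bipart I l r" "B' \<in> bipart I l r" "B \<noteq> B'" for B B'
  proof -
    obtain i j where ij: "i \<in> I" "j \<in> I" "B = Inl ` l i \<union> Inr ` r i" "B' = Inl ` l j \<union> Inr ` r j"
      using B(1,2) unfolding bipart_def by auto
    moreover from ij B(3) have "i \<noteq> j" by blast
    ultimately have "l i \<inter> l j = {}" "r i \<inter> r j = {}"
      using disjoint_family_onD[OF dl] disjoint_family_onD[OF dr] by auto
    then show ?thesis unfolding disjnt_def ij(3,4) by auto
  qed
  have meets: "(\<exists>a. Inl a \<in> B) \<and> (\<exists>b. Inr b \<in> B)" if "B \<in> bipart I l r" for B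
    using that partition_on_image_nonempty[OF l(1)] partition_on_image_nonempty[OF r(1)]
    unfolding bipart_def by blast
  have "{} \<notin> bipart I l r" using meets[of "{}"] by auto
  with union disjoint have "partition_on (carrierX n) (bipart I l r)" by (intro partition_onI)
  with meets show ?thesis unfolding Istar_def by blast
qed

lemma mem_Pair_image [simp]: "x \<in> Pair k ` S \<longleftrightarrow> fst x = k \<and> snd x \<in> S"
  by (cases x) auto

lemma genrel_bipart_iff:
  "(x, y) \<in> genrel (bipart I l r) (bipart J l' r') \<longleftrightarrow>
     (\<exists>i\<in>I. x \<in> Pair 0 ` l i \<union> Pair 1 ` r i \<and> y \<in> Pair 0 ` l i \<union> Pair 1 ` r i) \<or>
     (\<exists>j\<in>J. x \<in> Pair 1 ` l' j \<union> Pair 2 ` r' j \<and> y \<in> Pair 1 ` l' j \<union> Pair 2 ` r' j)"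
proof -
  have "lift1 ` (Inl ` S \<union> Inr ` T) = Pair 0 ` S \<union> Pair 1 ` T"
    and "lift2 ` (Inl ` S \<union> Inr ` T) = Pair 1 ` S \<union> Pair 2 ` T" for S T
    by (auto simp: image_Un image_image)
  then show ?thesis unfolding genrel_def bipart_def by auto
qed

lemma Pair_layers_disjoint:
  "A \<inter> A' = {} \<Longrightarrow> B \<inter> B' = {} \<Longrightarrow> C \<inter> C' = {} \<Longrightarrow>
    (Pair (0::nat) ` A \<union> Pair 1 ` B \<union> Pair 2 ` C) \<inter> (Pair 0 ` A' \<union> Pair 1 ` B' \<union> Pair 2 ` C') = {}"
  by auto

lemma down_outer_layers:
  "down ` ((Pair (0::nat) ` S \<union> Pair 1 ` M \<union> Pair 2 ` T) \<inter> {x. fst x \<noteq> 1}) = Inl ` S \<union> Inr ` T"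
proof -
  have "(Pair (0::nat) ` S \<union> Pair 1 ` M \<union> Pair 2 ` T) \<inter> {x. fst x \<noteq> 1} = Pair 0 ` S \<union> Pair 2 ` T"
    by auto
  then show ?thesis by (simp add: image_Un image_image)
qed

lemma pprod_bipart_coarser_right:
  assumes l: "disjoint_family_on l I" and r_ne: "\<And>i. i \<in> I \<Longrightarrow> r i \<noteq> {}"
    and l': "disjoint_family_on l' J" and r': "disjoint_family_on r' J"
    and l'_ne: "\<And>j. j \<in> J \<Longrightarrow> l' j \<noteq> {}" and r'_ne: "\<And>j. j \<in> J \<Longrightarrow> r' j \<noteq> {}"
    and coarser: "\<And>i. i \<in> I \<Longrightarrow> \<exists>j\<in>J. r i \<subseteq> l' j"
  shows "pprod (bipart I l r) (bipart J l' r') = bipart J (\<lambda>j. \<Union>(l ` {i \<in> I. r i \<subseteq> l' j})) r'"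
proof -
  define U where "U j = \<Union>(l ` {i \<in> I. r i \<subseteq> l' j})" for j
  define Z where "Z j = Pair (0::nat) ` U j \<union> Pair 1 ` l' j \<union> Pair 2 ` r' j" for j
  define c where "c j = (1::nat, SOME y. y \<in> l' j)" for j
  let ?R = "genrel (bipart I l r) (bipart J l' r')"
  have "pprod (bipart I l r) (bipart J l' r') = (\<lambda>j. down ` (Z j \<inter> {x. fst x \<noteq> 1})) ` J"
  proof (rule pprod_eqI)
    fix x y assume "(x, y) \<in> ?R"
    then show "\<exists>j\<in>J. x \<in> Z j \<and> y \<in> Z j"
      unfolding genrel_bipart_iff
    proof (elim disjE bexE)
      fix i assume i: "i \<in> I"
        and xy: "x \<in> Pair 0 ` l i \<union> Pair 1 ` r i \<and> y \<in> Pair 0 ` l i \<union> Pair 1 ` r i"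
      obtain j where j: "j \<in> J" "r i \<subseteq> l' j" using coarser[OF i] by blast
      then have "l i \<subseteq> U j" unfolding U_def using i by blast
      with j xy show ?thesis unfolding Z_def by blast
    qed (auto simp: Z_def)
  next
    have "disjoint_family_on U J"
      unfolding U_def using l r_ne l' by (rule disjoint_family_on_Union_image_subset)
    then show "disjoint_family_on Z J"
      unfolding disjoint_family_on_def Z_def
      by (intro ballI impI Pair_layers_disjoint) (use l' r' in \<open>auto dest: disjoint_family_onD\<close>)
  next
    fix j x assume j: "j \<in> J" and x: "x \<in> Z j"
    have c: "c j \<in> Pair 1 ` l' j" using l'_ne[OF j] some_in_eq unfolding c_def by auto
    show "(x, c j) \<in> ?R\<^sup>*"
    proof (cases "fst x = 0")
      case True
      then obtain i where i: "i \<in> I" "r i \<subseteq> l' j" "snd x \<in> l i"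
        using x unfolding Z_def U_def by auto
      obtain z where z: "z \<in> r i" using r_ne[OF i(1)] by blast
      have "(x, (1, z)) \<in> ?R" "((1, z), c j) \<in> ?R"
        unfolding genrel_bipart_iff using i j z c True by auto
      then show ?thesis by (meson converse_rtrancl_into_rtrancl r_into_rtrancl)
    next
      case False
      then have "(x, c j) \<in> ?R"
        using x j c unfolding genrel_bipart_iff Z_def by auto
      then show ?thesis by blast
    qed
  next
    show "fst (c j) = 1" for j unfolding c_def by simp
  next
    fix j assume "j \<in> J"
    then obtain y where "y \<in> r' j" using r'_ne by blast
    then show "\<exists>x\<in>Z j. fst x \<noteq> 1" unfolding Z_def by (intro bexI[of _ "(2, y)"]) auto
  qed
  also have "\<dots> = bipart J U r'"
    unfolding bipart_def Z_def down_outer_layers ..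
  finally show ?thesis unfolding U_def .
qed

lemma pprod_bipart_coarser_left:
  assumes l: "disjoint_family_on l I" and r: "disjoint_family_on r I"
    and l_ne: "\<And>i. i \<in> I \<Longrightarrow> l i \<noteq> {}" and r_ne: "\<And>i. i \<in> I \<Longrightarrow> r i \<noteq> {}"
    and r': "disjoint_family_on r' J" and l'_ne: "\<And>j. j \<in> J \<Longrightarrow> l' j \<noteq> {}"
    and coarser: "\<And>j. j \<in> J \<Longrightarrow> \<exists>i\<in>I. l' j \<subseteq> r i"
  shows "pprod (bipart I l r) (bipart J l' r') = bipart I l (\<lambda>i. \<Union>(r' ` {j \<in> J. l' j \<subseteq> r i}))"
proof -
  define V where "V i = \<Union>(r' ` {j \<in> J. l' j \<subseteq> r i})" for i
  define Z where "Z i = Pair (0::nat) ` l i \<union> Pair 1 ` r i \<union> Pair 2 ` V i" for i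
  define c where "c i = (1::nat, SOME y. y \<in> r i)" for i
  let ?R = "genrel (bipart I l r) (bipart J l' r')"
  have "pprod (bipart I l r) (bipart J l' r') = (\<lambda>i. down ` (Z i \<inter> {x. fst x \<noteq> 1})) ` I"
  proof (rule pprod_eqI)
    fix x y assume "(x, y) \<in> ?R"
    then show "\<exists>i\<in>I. x \<in> Z i \<and> y \<in> Z i"
      unfolding genrel_bipart_iff
    proof (elim disjE bexE)
      fix j assume j: "j \<in> J"
        and xy: "x \<in> Pair 1 ` l' j \<union> Pair 2 ` r' j \<and> y \<in> Pair 1 ` l' j \<union> Pair 2 ` r' j"
      obtain i where i: "i \<in> I" "l' j \<subseteq> r i" using coarser[OF j] by blast
      then have "r' j \<subseteq> V i" unfolding V_def using j by blast
      with i xy show ?thesis unfolding Z_def by blast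
    qed (auto simp: Z_def)
  next
    have "disjoint_family_on V I"
      unfolding V_def using r' l'_ne r by (rule disjoint_family_on_Union_image_subset)
    then show "disjoint_family_on Z I"
      unfolding disjoint_family_on_def Z_def
      by (intro ballI impI Pair_layers_disjoint) (use l r in \<open>auto dest: disjoint_family_onD\<close>)
  next
    fix i x assume i: "i \<in> I" and x: "x \<in> Z i"
    have c: "c i \<in> Pair 1 ` r i" using r_ne[OF i] some_in_eq unfolding c_def by auto
    show "(x, c i) \<in> ?R\<^sup>*"
    proof (cases "fst x = 2")
      case True
      then obtain j where j: "j \<in> J" "l' j \<subseteq> r i" "snd x \<in> r' j"
        using x unfolding Z_def V_def by auto
      obtain z where z: "z \<in> l' j" using l'_ne[OF j(1)] by blast
      have "(x, (1, z)) \<in> ?R" "((1, z), c i) \<in> ?R"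
        unfolding genrel_bipart_iff using i j z c True by auto
      then show ?thesis by (meson converse_rtrancl_into_rtrancl r_into_rtrancl)
    next
      case False
      then have "(x, c i) \<in> ?R"
        using x i c unfolding genrel_bipart_iff Z_def by auto
      then show ?thesis by blast
    qed
  next
    show "fst (c i) = 1" for i unfolding c_def by simp
  next
    fix i assume "i \<in> I"
    then obtain y where "y \<in> l i" using l_ne by blast
    then show "\<exists>x\<in>Z i. fst x \<noteq> 1" unfolding Z_def by (intro bexI[of _ "(0, y)"]) auto
  qed
  also have "\<dots> = bipart I l V"
    unfolding bipart_def Z_def down_outer_layers ..
  finally show ?thesis unfolding V_def .
qed

lemma pprod_bipart_compose:
  assumes f: "disjoint_family_on f I"
    and g: "disjoint_family_on g I" "\<And>i. i \<in> I \<Longrightarrow> g i \<noteq> {}"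
    and h: "disjoint_family_on h I" "\<And>i. i \<in> I \<Longrightarrow> h i \<noteq> {}"
  shows "pprod (bipart I f g) (bipart I g h) = bipart I f h"
proof -
  have "pprod (bipart I f g) (bipart I g h) = bipart I (\<lambda>j. \<Union>(f ` {i \<in> I. g i \<subseteq> g j})) h"
    by (rule pprod_bipart_coarser_right) (use assms in auto)
  also have "\<dots> = bipart I f h"
    by (rule bipart_cong) (simp_all add: Union_image_subset_self[OF g])
  finally show ?thesis .
qed

lemma joined_of_bipart_sandwich:
  assumes l: "partition_on {1..n} (l ` I)" "inj_on l I"
    and r: "partition_on {1..n} (r ` I)" "inj_on r I"
    and t: "t \<in> Istar n"
    and sts: "pprod (pprod (bipart I l r) t) (bipart I l r) = bipart I l r"
    and ab: "joined t (Inl a) (Inr b)"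
  shows "\<exists>i\<in>I. a \<in> r i \<and> b \<in> l i"
proof -
  let ?s = "bipart I l r"
  have "a \<in> {1..n}" "b \<in> {1..n}"
    using joined_in_carrier[OF Istar_partition_on[OF t] ab] by simp_all
  then obtain i i' where i: "i \<in> I" "a \<in> r i" and i': "i' \<in> I" "b \<in> l i'"
    using partition_onD1[OF l(1)] partition_onD1[OF r(1)] by blast
  obtain e where e: "e \<in> l i" using partition_on_image_nonempty[OF l(1) i(1)] by blast
  obtain x where x: "x \<in> r i'" using partition_on_image_nonempty[OF r(1) i'(1)] by blast
  have "joined ?s (Inl e) (Inr a)" "joined ?s (Inl b) (Inr x)"
    unfolding joined_bipart using i i' e x by blast+
  then have "joined (pprod (pprod ?s t) ?s) (Inl e) (Inr x)"
    using ab by (blast intro: joined_pprod)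
  then obtain i'' where "i'' \<in> I" "e \<in> l i''" "x \<in> r i''"
    unfolding sts joined_bipart by blast
  with i i' e x have "i'' = i" "i'' = i'"
    using disjoint_family_onD[OF disjoint_family_on_partition_on[OF l]]
      disjoint_family_onD[OF disjoint_family_on_partition_on[OF r]] by blast+
  with i i' show ?thesis by blast
qed

lemma bipart_inverse_unique:
  assumes l: "partition_on {1..n} (l ` I)" "inj_on l I"
    and r: "partition_on {1..n} (r ` I)" "inj_on r I"
    and t: "t \<in> Istar n"
    and sts: "pprod (pprod (bipart I l r) t) (bipart I l r) = bipart I l r"
    and tst: "pprod (pprod t (bipart I l r)) t = t"
  shows "t = bipart I r l"
proof (rule Istar_eqI[OF t bipart_in_Istar[OF r l]], unfold joined_bipart, intro iffI)
  note joined_t = joined_of_bipart_sandwich[OF l r t sts]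
  fix a b assume "\<exists>i\<in>I. a \<in> r i \<and> b \<in> l i"
  then obtain i where i: "i \<in> I" "a \<in> r i" "b \<in> l i" by blast
  then have "a \<in> {1..n}" "b \<in> {1..n}"
    using partition_onD1[OF l(1)] partition_onD1[OF r(1)] by blast+
  then obtain a' b' where a': "joined t (Inl a) (Inr b')" and b': "joined t (Inl a') (Inr b)"
    using Istar_joined_Inr[OF t] Istar_joined_Inl[OF t] by metis
  have "b' \<in> l i" "a' \<in> r i"
    using joined_t[OF a'] joined_t[OF b'] i
      disjoint_family_onD[OF disjoint_family_on_partition_on[OF l]]
      disjoint_family_onD[OF disjoint_family_on_partition_on[OF r]] by blast+
  then have "joined (bipart I l r) (Inl b') (Inr a')"
    using i(1) unfolding joined_bipart by blast
  then have "joined (pprod (pprod t (bipart I l r)) t) (Inl a) (Inr b)"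
    using a' b' by (blast intro: joined_pprod)
  then show "joined t (Inl a) (Inr b)" unfolding tst .
qed (use joined_of_bipart_sandwich[OF l r t sts] in blast)

lemma pinv_bipart:
  assumes l: "partition_on {1..n} (l ` I)" "inj_on l I"
    and r: "partition_on {1..n} (r ` I)" "inj_on r I"
  shows "pinv n (bipart I l r) = bipart I r l"
  unfolding pinv_def
proof (rule the_equality)
  have dl: "disjoint_family_on l I" and dr: "disjoint_family_on r I"
    using l r by (simp_all add: disjoint_family_on_partition_on)
  note ne = partition_on_image_nonempty[OF l(1)] partition_on_image_nonempty[OF r(1)]
  have "pprod (pprod (bipart I l r) (bipart I r l)) (bipart I l r) = bipart I l r"
    "pprod (pprod (bipart I r l) (bipart I l r)) (bipart I r l) = bipart I r l"
    using dl dr ne by (simp_all add: pprod_bipart_compose)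
  then show "bipart I r l \<in> Istar n \<and>
      pprod (pprod (bipart I l r) (bipart I r l)) (bipart I l r) = bipart I l r \<and>
      pprod (pprod (bipart I r l) (bipart I l r)) (bipart I r l) = bipart I r l"
    using bipart_in_Istar[OF r l] by blast
qed (use bipart_inverse_unique[OF l r] in blast)

section \<open>Idempotents\<close>

definition diag :: "nat set set \<Rightarrow> bpart" where
  "diag P = bipart P (\<lambda>E. E) (\<lambda>E. E)"

lemma bipart_eq_diag: "bipart I f f = diag (f ` I)"
  unfolding diag_def bipart_def image_image ..

lemma joined_diag_Inl: "joined (diag P) (Inl i) (Inl j) \<longleftrightarrow> joined P i j"
  unfolding joined_def diag_def bipart_def by blast

lemma inj_diag_block: "inj (\<lambda>E. Inl ` E \<union> Inr ` E :: pt set)"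
proof (rule injI)
  fix E E' :: "nat set" assume "Inl ` E \<union> Inr ` E = (Inl ` E' \<union> Inr ` E' :: pt set)"
  then have "Inl x \<in> Inl ` E \<union> Inr ` E \<longleftrightarrow> Inl x \<in> (Inl ` E' \<union> Inr ` E' :: pt set)" for x by simp
  then show "E = E'" by auto
qed

lemma diag_inj: "diag P = diag Q \<Longrightarrow> P = Q"
  unfolding diag_def bipart_def using inj_diag_block by (simp add: inj_image_eq_iff)

lemma rank_diag: "rank (diag P) = card P"
  unfolding rank_def diag_def bipart_def using inj_diag_block by (simp add: card_image inj_on_subset)

lemma diag_in_Istar: "partition_on {1..n} P \<Longrightarrow> diag P \<in> Istar n"
  unfolding diag_def by (rule bipart_in_Istar) auto

lemma pprod_diag_coarser_right:
  assumes "refines S P Q"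
  shows "pprod (diag P) (diag Q) = diag Q"
proof -
  have P: "partition_on S P" and Q: "partition_on S Q" using assms unfolding refines_def by blast+
  have dP: "disjoint_family_on (\<lambda>E. E) P" and dQ: "disjoint_family_on (\<lambda>E. E) Q"
    using P Q by (simp_all add: disjoint_family_on_partition_on)
  have "pprod (diag P) (diag Q) = bipart Q (\<lambda>F. \<Union>{E \<in> P. E \<subseteq> F}) (\<lambda>F. F)"
    unfolding diag_def using dP dQ partition_onD3[OF P] partition_onD3[OF Q] assms
    by (subst pprod_bipart_coarser_right) (auto simp: refines_def)
  also have "\<dots> = diag Q"
    unfolding diag_def by (rule bipart_cong) (simp_all add: Union_refines_blocks[OF assms])
  finally show ?thesis .
qed

lemma pprod_diag_coarser_left:
  assumes "refines S P Q"
  shows "pprod (diag Q) (diag P) = diag Q"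
proof -
  have P: "partition_on S P" and Q: "partition_on S Q" using assms unfolding refines_def by blast+
  have dP: "disjoint_family_on (\<lambda>E. E) P" and dQ: "disjoint_family_on (\<lambda>E. E) Q"
    using P Q by (simp_all add: disjoint_family_on_partition_on)
  have "pprod (diag Q) (diag P) = bipart Q (\<lambda>F. F) (\<lambda>F. \<Union>{E \<in> P. E \<subseteq> F})"
    unfolding diag_def using dP dQ partition_onD3[OF P] partition_onD3[OF Q] assms
    by (subst pprod_bipart_coarser_left) (auto simp: refines_def)
  also have "\<dots> = diag Q"
    unfolding diag_def by (rule bipart_cong) (simp_all add: Union_refines_blocks[OF assms])
  finally show ?thesis .
qed

lemma diag_in_En: "partition_on {1..n} P \<Longrightarrow> diag P \<in> En n"
  unfolding En_def using diag_in_Istar pprod_diag_coarser_right refines_refl by blast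

lemma En_block_Inl_iff_Inr:
  assumes "e \<in> En n" "B \<in> e"
  shows "Inl i \<in> B \<longleftrightarrow> Inr i \<in> B"
proof -
  have t: "e \<in> Istar n" and idem: "pprod e e = e" using assms(1) unfolding En_def by auto
  note e = Istar_partition_on[OF t]
  have diagonal: "joined e (Inl i) (Inr i)" if i: "i \<in> {1..n}"
  proof -
    obtain j where j: "joined e (Inl i) (Inr j)" using Istar_joined_Inr[OF t i] by blast
    obtain k where k: "joined e (Inl k) (Inr i)" using Istar_joined_Inl[OF t i] by blast
    have "joined e (Inl k) (Inr j)" using joined_pprod[OF k j] unfolding idem .
    then show ?thesis using joined_trans[OF e joined_trans[OF e j joined_sym] k] by blast
  qed
  have "Inl i \<in> carrierX n \<or> Inr i \<in> carrierX n" if "Inl i \<in> B \<or> Inr i \<in> B"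
    using that assms(2) partition_onD1[OF e] by blast
  then show ?thesis
    using diagonal partition_on_block_unique[OF e assms(2)] unfolding joined_def by auto
qed

lemma En_diag:
  assumes "e \<in> En n"
  obtains P where "partition_on {1..n} P" "e = diag P"
proof -
  have t: "e \<in> Istar n" using assms unfolding En_def by auto
  have "Inl ` (Inl -` B) \<union> Inr ` (Inl -` B) = B" if B: "B \<in> e" for B
  proof (rule set_eqI)
    show "p \<in> Inl ` (Inl -` B) \<union> Inr ` (Inl -` B) \<longleftrightarrow> p \<in> B" for p
      by (cases p) (auto simp: En_block_Inl_iff_Inr[OF assms B])
  qed
  then have "e = diag ((-`) Inl ` e)"
    unfolding diag_def bipart_def image_image by (simp cong: image_cong)
  moreover have "partition_on {1..n} ((-`) Inl ` e)"
  proof -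
    have "partition_on (Inl -` carrierX n) ((-`) Inl ` e - {{}})"
      by (rule partition_on_vimage[OF Istar_partition_on[OF t]])
    moreover have "Inl -` carrierX n = {1..n}" by auto
    moreover have "{} \<notin> (-`) Inl ` e" using Istar_block_Inl[OF t] by blast
    ultimately show ?thesis by simp
  qed
  ultimately show ?thesis using that by blast
qed

lemma diag_in_En_iff: "diag P \<in> En n \<longleftrightarrow> partition_on {1..n} P"
  using diag_in_En En_diag diag_inj by metis

lemma finite_En: "finite (En n)"
proof -
  have "finite {P. partition_on (carrierX n) P}"
    by (rule finitely_many_partition_on) (simp add: carrierX_def)
  moreover have "En n \<subseteq> {P. partition_on (carrierX n) P}" unfolding En_def Istar_def by blast
  ultimately show ?thesis by (rule finite_subset[rotated])
qed

lemma refines_pprod_diag: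
  assumes P: "partition_on S P" and Q: "partition_on S Q" and W: "partition_on S W"
    and PQ: "pprod (diag P) (diag Q) = diag W"
  shows "refines S P W" "refines S Q W"
proof -
  let ?R = "genrel (diag P) (diag Q)"
  have P_blocks: "((0, i), (0, j)) \<in> ?R" "((0, i), (1, j)) \<in> ?R" "((1, i), (0, j)) \<in> ?R"
    if "E \<in> P" "i \<in> E" "j \<in> E" for E i j
    using that unfolding diag_def genrel_bipart_iff by auto
  have Q_blocks: "((1, i), (1, j)) \<in> ?R" if "F \<in> Q" "i \<in> F" "j \<in> F" for F i j
    using that unfolding diag_def genrel_bipart_iff by auto
  have joined_W: "joined W i j" if "((0, i), (0, j)) \<in> ?R\<^sup>*" "((0, i), (0, i)) \<in> ?R" for i j
    using joined_pprodI[OF that] unfolding PQ by (simp add: joined_diag_Inl)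
  have "\<exists>G\<in>W. E \<subseteq> G" if "E \<in> P" for E
  proof (rule joined_subset_block[OF W])
    show "E \<noteq> {}" using partition_onD3[OF P] \<open>E \<in> P\<close> by blast
    show "joined W i j" if "i \<in> E" "j \<in> E" for i j
      using joined_W P_blocks \<open>E \<in> P\<close> that by blast
  qed
  then show "refines S P W" unfolding refines_def using P W by blast
  have "\<exists>G\<in>W. F \<subseteq> G" if F: "F \<in> Q" for F
  proof (rule joined_subset_block[OF W])
    show "F \<noteq> {}" using partition_onD3[OF Q] F by blast
    fix i j assume ij: "i \<in> F" "j \<in> F"
    then have "i \<in> S" "j \<in> S" using F partition_onD1[OF Q] by blast+
    then obtain Ei Ej where "Ei \<in> P" "i \<in> Ei" "Ej \<in> P" "j \<in> Ej" using partition_onD1[OF P] by blast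
    then have "((0, i), (1, i)) \<in> ?R" "((1, i), (1, j)) \<in> ?R" "((1, j), (0, j)) \<in> ?R" "((0, i), (0, i)) \<in> ?R"
      using P_blocks Q_blocks F ij by blast+
    then show "joined W i j" using joined_W by (meson converse_rtrancl_into_rtrancl r_into_rtrancl)
  qed
  then show "refines S Q W" unfolding refines_def using Q W by blast
qed

lemma conjugate_diag:
  assumes AQ: "refines {1..n} A Q" and \<phi>: "partition_on {1..n} (\<phi> ` A)" "inj_on \<phi> A"
  shows "pprod (pprod (pinv n (bipart A (\<lambda>E. E) \<phi>)) (diag Q)) (bipart A (\<lambda>E. E) \<phi>)
    = diag ((\<lambda>F. \<Union>(\<phi> ` {E \<in> A. E \<subseteq> F})) ` Q)"
proof -
  define m where "m = (\<lambda>F. \<Union>(\<phi> ` {E \<in> A. E \<subseteq> F}))"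
  have A: "partition_on {1..n} A" and Q: "partition_on {1..n} Q" using AQ unfolding refines_def by blast+
  have dQ: "disjoint_family_on (\<lambda>F. F) Q" and d\<phi>: "disjoint_family_on \<phi> A"
    using Q \<phi> by (simp_all add: disjoint_family_on_partition_on)
  have neA: "{} \<notin> A" and neQ: "{} \<notin> Q" using A Q partition_onD3 by blast+
  note ne\<phi> = partition_on_image_nonempty[OF \<phi>(1)]
  have coarser: "\<exists>F\<in>Q. E \<subseteq> F" if "E \<in> A" for E using AQ that unfolding refines_def by blast
  have dm: "disjoint_family_on m Q"
    unfolding m_def using d\<phi> _ dQ by (rule disjoint_family_on_Union_image_subset) (use neA in blast)
  have nem: "m F \<noteq> {}" if F: "F \<in> Q" for F
  proof -
    obtain E where "E \<in> A" "E \<subseteq> F" using refines_block_contains[OF AQ F] .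
    then show ?thesis using ne\<phi> unfolding m_def by blast
  qed
  have "pinv n (bipart A (\<lambda>E. E) \<phi>) = bipart A \<phi> (\<lambda>E. E)"
    by (rule pinv_bipart) (use A \<phi> in simp_all)
  moreover have "pprod (bipart A \<phi> (\<lambda>E. E)) (diag Q) = bipart Q m (\<lambda>F. F)"
    unfolding diag_def m_def by (rule pprod_bipart_coarser_right) (use d\<phi> dQ neA neQ coarser in auto)
  moreover have "pprod (bipart Q m (\<lambda>F. F)) (bipart A (\<lambda>E. E) \<phi>)
      = bipart Q m (\<lambda>F. \<Union>(\<phi> ` {E \<in> A. E \<subseteq> F}))"
    by (rule pprod_bipart_coarser_left) (use dm dQ nem neQ d\<phi> neA coarser in auto)
  ultimately show ?thesis by (simp add: bipart_eq_diag m_def)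
qed

lemma conjugate_diag_self:
  assumes A: "partition_on {1..n} A" and \<phi>: "partition_on {1..n} (\<phi> ` A)" "inj_on \<phi> A"
  shows "pprod (pprod (pinv n (bipart A (\<lambda>E. E) \<phi>)) (diag A)) (bipart A (\<lambda>E. E) \<phi>) = diag (\<phi> ` A)"
proof -
  have dA: "disjoint_family_on (\<lambda>E. E) A" using A by (simp add: disjoint_family_on_partition_on)
  have neA: "E \<noteq> {}" if "E \<in> A" for E using partition_onD3[OF A] that by blast
  have "\<Union>(\<phi> ` {E' \<in> A. E' \<subseteq> E}) = \<phi> E" if "E \<in> A" for E
    by (rule Union_image_subset_self[OF dA neA that])
  then show ?thesis
    unfolding conjugate_diag[OF refines_refl[OF A] \<phi>] by (simp cong: image_cong)
qed

lemma conjugate_diag_zero: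
  assumes n: "1 \<le> n" and A: "partition_on {1..n} A" and \<phi>: "partition_on {1..n} (\<phi> ` A)" "inj_on \<phi> A"
  shows "pprod (pprod (pinv n (bipart A (\<lambda>E. E) \<phi>)) (diag {{1..n}})) (bipart A (\<lambda>E. E) \<phi>)
    = diag {{1..n}}"
proof -
  have "refines {1..n} A {{1..n}}"
    using A partition_on_one_block[OF n] unfolding refines_def partition_on_def by blast
  moreover have "{E \<in> A. E \<subseteq> {1..n}} = A" using partition_onD1[OF A] by blast
  then have "\<Union>(\<phi> ` {E \<in> A. E \<subseteq> {1..n}}) = {1..n}" using partition_onD1[OF \<phi>(1)] by simp
  ultimately show ?thesis using conjugate_diag \<phi> by simp
qed

section \<open>Normal congruences\<close>

locale normal_cong =
  fixes n :: nat and L :: "(bpart \<times> bpart) set"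
  assumes n_pos: "1 \<le> n" and normal: "normal_congruence n L"
begin

lemma L_equiv: "equiv (En n) L"
  using normal unfolding normal_congruence_def semilattice_congruence_def by blast

lemma L_En: "(e, f) \<in> L \<Longrightarrow> e \<in> En n \<and> f \<in> En n"
  using equiv_type[OF L_equiv] by blast

lemma L_refl: "e \<in> En n \<Longrightarrow> (e, e) \<in> L"
  using L_equiv unfolding equiv_def refl_on_def by blast

lemma L_sym: "(e, f) \<in> L \<Longrightarrow> (f, e) \<in> L"
  using L_equiv unfolding equiv_def by (meson symD)

lemma L_trans: "(e, f) \<in> L \<Longrightarrow> (f, g) \<in> L \<Longrightarrow> (e, g) \<in> L"
  using L_equiv unfolding equiv_def by (meson transD)

lemma L_pprod_right: "(e, f) \<in> L \<Longrightarrow> g \<in> En n \<Longrightarrow> (pprod e g, pprod f g) \<in> L"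
  using normal unfolding normal_congruence_def semilattice_congruence_def by blast

lemma L_pprod_left: "(e, f) \<in> L \<Longrightarrow> g \<in> En n \<Longrightarrow> (pprod g e, pprod g f) \<in> L"
  using normal unfolding normal_congruence_def semilattice_congruence_def by blast

lemma L_conjugate:
  "(e, f) \<in> L \<Longrightarrow> s \<in> Istar n \<Longrightarrow> (pprod (pprod (pinv n s) e) s, pprod (pprod (pinv n s) f) s) \<in> L"
  using normal unfolding normal_congruence_def by blast

lemma related_permute_blocks:
  assumes XY: "refines {1..n} X Y" and L: "(diag X, diag Y) \<in> L" and \<phi>: "bij_betw \<phi> X X"
  shows "(diag X, diag ((\<lambda>F. \<Union>(\<phi> ` {E \<in> X. E \<subseteq> F})) ` Y)) \<in> L"
proof -
  have X: "partition_on {1..n} X" using XY unfolding refines_def by blast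
  have \<phi>X: "partition_on {1..n} (\<phi> ` X)" "inj_on \<phi> X"
    using X \<phi> unfolding bij_betw_def by simp_all
  have "bipart X (\<lambda>E. E) \<phi> \<in> Istar n" by (rule bipart_in_Istar) (use X \<phi>X in simp_all)
  from L_conjugate[OF L this] show ?thesis
    unfolding conjugate_diag_self[OF X \<phi>X] conjugate_diag[OF XY \<phi>X] bij_betw_imp_surj_on[OF \<phi>] .
qed

text \<open>Conjugating by the transposition fixes diag X and turns diag Y into diag (m ` Y), whose
  block m F meets both F and F2; so multiplying diag Y by it merges F and F2.\<close>

lemma related_coarser_step:
  assumes XY: "refines {1..n} X Y" "X \<noteq> Y" and Y: "2 \<le> card Y" and L: "(diag X, diag Y) \<in> L"
  obtains W where "refines {1..n} X W" "X \<noteq> W" "card W < card Y" "(diag X, diag W) \<in> L"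
proof -
  have X: "partition_on {1..n} X" and Yp: "partition_on {1..n} Y" using XY unfolding refines_def by blast+
  obtain \<phi> F F2 where \<phi>: "bij_betw \<phi> X X" "\<And>E. \<phi> (\<phi> E) = E" and F: "F \<in> Y" "F2 \<in> Y" "F \<noteq> F2"
    and meets: "\<Union>(\<phi> ` {E \<in> X. E \<subseteq> F}) \<inter> F \<noteq> {}" "\<Union>(\<phi> ` {E \<in> X. E \<subseteq> F}) \<inter> F2 \<noteq> {}"
    using exists_block_transposition[OF XY Y] by blast
  define m where "m F' = \<Union>(\<phi> ` {E \<in> X. E \<subseteq> F'})" for F'
  have LY': "(diag X, diag (m ` Y)) \<in> L"
    unfolding m_def by (rule related_permute_blocks) fact+
  then have Y': "partition_on {1..n} (m ` Y)" using L_En diag_in_En_iff by blast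
  have "refines {1..n} X (m ` Y)" unfolding refines_def
  proof (intro conjI ballI X Y')
    fix E assume "E \<in> X"
    then have "\<phi> E \<in> X" using \<phi>(1) bij_betwE by blast
    then obtain F' where "F' \<in> Y" "\<phi> E \<subseteq> F'" using XY unfolding refines_def by blast
    then show "\<exists>G\<in>m ` Y. E \<subseteq> G" unfolding m_def using \<phi>(2)[of E] \<open>\<phi> E \<in> X\<close> by blast
  qed
  then have "pprod (diag X) (diag (m ` Y)) = diag (m ` Y)" by (rule pprod_diag_coarser_right)
  then have LW: "(diag (m ` Y), pprod (diag Y) (diag (m ` Y))) \<in> L"
    using L_pprod_right[OF L] Y' diag_in_En_iff by metis
  then obtain W where W: "partition_on {1..n} W" "pprod (diag Y) (diag (m ` Y)) = diag W"
    using L_En En_diag by metis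
  note YW = refines_pprod_diag[OF Yp Y' W]
  obtain G where G: "G \<in> W" "m F \<subseteq> G" using YW(2) F(1) unfolding refines_def by blast
  then have "F \<subseteq> G" "F2 \<subseteq> G"
    using refines_block_subset[OF YW(1) _ G(1)] F meets unfolding m_def by blast+
  then have less: "card W < card Y" using card_refines_less[OF YW(1) _ F G(1)] by simp
  have "refines {1..n} X W" using refines_trans[OF XY(1) YW(1)] .
  moreover have "X \<noteq> W" using refines_asym[OF XY(1)] YW(1) less by blast
  moreover have "(diag X, diag W) \<in> L" using L_trans[OF LY' LW] W(2) by simp
  ultimately show ?thesis using that less by blast
qed

lemma related_coarser_imp_zero:
  "refines {1..n} X Y \<Longrightarrow> X \<noteq> Y \<Longrightarrow> (diag X, diag Y) \<in> L \<Longrightarrow> (diag X, diag {{1..n}}) \<in> L"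
proof (induction "card Y" arbitrary: Y rule: less_induct)
  case less
  have Y: "partition_on {1..n} Y" using less.prems(1) unfolding refines_def by blast
  show ?case
  proof (cases "2 \<le> card Y")
    case True
    then show ?thesis using related_coarser_step less by metis
  next
    case False
    then have "card Y = 1" using card_partition_on_atLeastAtMost[OF n_pos Y] by simp
    then obtain F where "Y = {F}" by (rule card_1_singletonE)
    then have "Y = {{1..n}}" using partition_onD1[OF Y] by simp
    then show ?thesis using less.prems(3) by simp
  qed
qed

lemma related_imp_zero:
  assumes ef: "(e, f) \<in> L" and "e \<noteq> f"
  shows "(e, diag {{1..n}}) \<in> L"
proof -
  obtain X Y where X: "partition_on {1..n} X" "e = diag X" and Y: "partition_on {1..n} Y" "f = diag Y"
    using L_En[OF ef] En_diag by metis
  have "pprod e e = e" "pprod f f = f" using L_En[OF ef] unfolding En_def by simp_all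
  then have eW: "(e, pprod e f) \<in> L" and Wf: "(pprod e f, f) \<in> L"
    using L_pprod_left[OF ef] L_pprod_right[OF ef] L_En[OF ef] by metis+
  then obtain W where W: "partition_on {1..n} W" "pprod e f = diag W"
    using L_En En_diag by metis
  have "pprod (diag X) (diag Y) = diag W" using W(2) X(2) Y(2) by simp
  note XW = refines_pprod_diag[OF X(1) Y(1) W(1) this]
  show ?thesis
  proof (cases "X = W")
    case False
    then show ?thesis using related_coarser_imp_zero XW(1) eW X(2) W(2) by metis
  next
    case True
    then have "Y \<noteq> W" using \<open>e \<noteq> f\<close> X(2) Y(2) by blast
    then have "(f, diag {{1..n}}) \<in> L" using related_coarser_imp_zero XW(2) L_sym[OF Wf] Y(2) W(2) by metis
    then show ?thesis using L_trans[OF ef] by blast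
  qed
qed

lemma related_zero_coarsening:
  assumes "(diag A, diag {{1..n}}) \<in> L" "refines {1..n} A A'"
  shows "(diag A', diag {{1..n}}) \<in> L"
proof -
  have A': "partition_on {1..n} A'" using assms(2) unfolding refines_def by blast
  then have "refines {1..n} A' {{1..n}}"
    using partition_on_one_block[OF n_pos] unfolding refines_def partition_on_def by blast
  then show ?thesis
    using L_pprod_right[OF assms(1), of "diag A'"] diag_in_En[OF A']
    by (simp add: pprod_diag_coarser_right[OF assms(2)] pprod_diag_coarser_left)
qed

lemma related_zero_same_card:
  assumes L: "(diag A, diag {{1..n}}) \<in> L" and B: "partition_on {1..n} B" and "card B = card A"
  shows "(diag B, diag {{1..n}}) \<in> L"
proof -
  have A: "partition_on {1..n} A" using L_En[OF L] diag_in_En_iff by blast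
  obtain \<phi> where \<phi>: "bij_betw \<phi> A B"
    using finite_same_card_bij finite_elements[OF _ A] finite_elements[OF _ B] \<open>card B = card A\<close>
    by (metis finite_atLeastAtMost)
  then have \<phi>A: "partition_on {1..n} (\<phi> ` A)" "inj_on \<phi> A" using B unfolding bij_betw_def by simp_all
  have "bipart A (\<lambda>E. E) \<phi> \<in> Istar n" by (rule bipart_in_Istar) (use A \<phi>A in simp_all)
  from L_conjugate[OF L this] show ?thesis
    unfolding conjugate_diag_self[OF A \<phi>A] conjugate_diag_zero[OF n_pos A \<phi>A] bij_betw_imp_surj_on[OF \<phi>] .
qed

lemma related_zero_card_le:
  assumes L: "(diag A, diag {{1..n}}) \<in> L" and B: "partition_on {1..n} B" and "card B \<le> card A"
  shows "(diag B, diag {{1..n}}) \<in> L"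
proof -
  have A: "partition_on {1..n} A" using L_En[OF L] diag_in_En_iff by blast
  have "1 \<le> card B" using card_partition_on_atLeastAtMost[OF n_pos B] by simp
  then obtain A' where "refines {1..n} A A'" "card A' = card B"
    using exists_coarsening_card[OF _ A] \<open>card B \<le> card A\<close> by blast
  then show ?thesis using related_zero_coarsening[OF L] related_zero_same_card B by metis
qed

definition zero_class :: "bpart set" where
  "zero_class = {e \<in> En n. (e, diag {{1..n}}) \<in> L}"

lemma L_eq_zero_class: "L = Id_on (En n) \<union> zero_class \<times> zero_class"
proof (intro set_eqI iffI)
  fix p assume "p \<in> L"
  then obtain e f where p: "p = (e, f)" and ef: "(e, f) \<in> L" by (cases p) blast
  show "p \<in> Id_on (En n) \<union> zero_class \<times> zero_class"
  proof (cases "e = f")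
    case False
    then have "e \<in> zero_class" "f \<in> zero_class"
      using related_imp_zero[OF ef] related_imp_zero[OF L_sym[OF ef]] L_En[OF ef] unfolding zero_class_def by auto
    then show ?thesis using p by blast
  qed (use p L_En[OF ef] in auto)
next
  fix p assume p: "p \<in> Id_on (En n) \<union> zero_class \<times> zero_class"
  show "p \<in> L"
  proof (cases "p \<in> Id_on (En n)")
    case False
    then obtain e f where "p = (e, f)" "(e, diag {{1..n}}) \<in> L" "(f, diag {{1..n}}) \<in> L"
      using p unfolding zero_class_def by blast
    then show ?thesis using L_trans L_sym by blast
  qed (use L_refl in \<open>auto simp: Id_on_def\<close>)
qed

lemma zero_class_eq_Enk: "\<exists>k\<in>{1..n}. zero_class = Enk n k"
proof -
  have top: "diag {{1..n}} \<in> zero_class"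
    unfolding zero_class_def using diag_in_En[OF partition_on_one_block[OF n_pos]] L_refl by blast
  have fin: "finite zero_class" unfolding zero_class_def using finite_En by simp
  define k where "k = Max (rank ` zero_class)"
  have "k \<in> rank ` zero_class" unfolding k_def using fin top by (intro Max_in) auto
  then obtain e0 where "e0 \<in> zero_class" "rank e0 = k" by blast
  moreover obtain A where "e0 = diag A" using \<open>e0 \<in> zero_class\<close> En_diag unfolding zero_class_def by blast
  ultimately have A: "diag A \<in> zero_class" "rank (diag A) = k" by simp_all
  have "partition_on {1..n} A" using A(1) diag_in_En_iff unfolding zero_class_def by blast
  moreover have "card A = k" using A(2) by (simp add: rank_diag)
  ultimately have "k \<in> {1..n}" using card_partition_on_atLeastAtMost[OF n_pos] by blast
  moreover have "zero_class = Enk n k"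
  proof
    show "zero_class \<subseteq> Enk n k" using fin unfolding Enk_def k_def zero_class_def by auto
    show "Enk n k \<subseteq> zero_class"
    proof
      fix e assume e: "e \<in> Enk n k"
      then obtain B where B: "partition_on {1..n} B" "e = diag B" unfolding Enk_def using En_diag by blast
      have "card B \<le> card A" using e A(2) B(2) unfolding Enk_def by (simp add: rank_diag)
      then show "e \<in> zero_class"
        using related_zero_card_le A(1) B e unfolding zero_class_def Enk_def by blast
    qed
  qed
  ultimately show ?thesis by blast
qed

end

theorem mainTheorem20:
  fixes n :: nat and L :: "(bpart \<times> bpart) set"
  assumes "n \<ge> 1" and "normal_congruence n L"
  shows "\<exists>k\<in>{1..n}. L = Id_on (En n) \<union> (Enk n k \<times> Enk n k)"
proof -
  interpret normal_cong n L using assms by unfold_locales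
  show ?thesis using zero_class_eq_Enk L_eq_zero_class by metis
qed

end
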